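(* Let $d\ge2$ and $c\in\mathbb{C}$ be such that $f(x)=x^d+c$ is not linearly conjugate to $x^d$ or to $\pm T_d(x)$, and let $n$ be a positive integer. If $A,B\in\mathbb{C}[x]$ are non-constant with $f^n\circ A=A\circ B$ and $\gcd(d,\deg A)=1$, then $A$ is linear.
   Context: $T_d$ is the Chebyshev polynomial of degree $d$ ($T_d(z+1/z)=z^d+1/z^d$); linear conjugacy means conjugacy by a linear polynomial. $f^n$ is the $n$-th iterate. *)

theory Defs
  imports "HOL-Computational_Algebra.Polynomial"
begin

text \<open>Chebyshev (Dickson) polynomials normalised so that T_d(z+1/z) = z^d + 1/z^d:
  T_0 = 2, T_1 = x, T_(n+2) = x T_(n+1) - T_n.\<close>
fun cheb :: "nat \<Rightarrow> complex poly" where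
  "cheb 0 = [:2:]"
| "cheb (Suc 0) = [:0, 1:]"
| "cheb (Suc (Suc n)) = [:0, 1:] * cheb (Suc n) - cheb n"

definition poly_iter :: "complex poly \<Rightarrow> nat \<Rightarrow> complex poly" where
  "poly_iter f n = ((\<lambda>p. pcompose f p) ^^ n) [:0, 1:]"

definition lin_conj :: "complex poly \<Rightarrow> complex poly \<Rightarrow> bool" where
  "lin_conj f g \<longleftrightarrow> (\<exists>L. degree L = 1 \<and> pcompose f L = pcompose L g)"

end

theory Submission
  imports Defs "HOL-Computational_Algebra.Fundamental_Theorem_Algebra"
begin

text \<open>From \<open>f^n \<circ> A = A \<circ> B\<close> one gets \<open>A \<circ> B - c = H^d\<close> with
  \<open>H = f^(n-1) \<circ> A\<close>. Comparing root multiplicities on both sides and using the polynomial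
  Riemann--Hurwitz bound, the coprimality of \<open>deg A\<close> and \<open>d\<close> forces \<open>A - c = a (x - r)^k Q^d\<close> and
  \<open>B = r + b S^d\<close> with \<open>k\<close> prime to \<open>d\<close>. Then \<open>A' = \<omega> x^k Q(r + b x^d)\<close> satisfies
  \<open>A'^d + c = A(r + b x^d)\<close>, solves the same equation with \<open>B' = S(r + b x^d)\<close>, and obeys
  \<open>A'(\<xi> x) = \<xi>^k A'(x)\<close> for \<open>\<xi>^d = 1\<close>. For such an \<open>A'\<close> of degree at least 2 the fibres over the
  \<open>d\<close> distinct values \<open>\<xi>^k c\<close> are as small as the one over \<open>c\<close>, and Riemann--Hurwitz forces
  \<open>d = 2\<close> with all critical values in \<open>{c, -c}\<close>, \<open>-c\<close> among them. Applying the construction once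
  more and differentiating \<open>A''^2 + c = A'(r' + b' x^2)\<close> at a preimage of a critical point of \<open>A'\<close>
  over \<open>-c\<close> yields a critical value of \<open>A''\<close> whose square is \<open>-2c\<close>; hence \<open>c^2 = -2c\<close>, so
  \<open>c = -2\<close> and \<open>f = T\<^sub>2\<close>.\<close>

section \<open>Fibres, multiplicities and Riemann--Hurwitz\<close>

lemma degree_diff_const:
  fixes p :: "'a::comm_ring poly"
  assumes "degree p > 0"
  shows "degree (p - [:w:]) = degree p"
proof -
  have "p - [:w:] = p + [:-w:]"
    by simp
  also have "degree \<dots> = degree p"
    using assms by (intro degree_add_eq_left) simp
  finally show ?thesis .
qed

lemma diff_const_nonzero:
  fixes p :: "'a::comm_ring poly"
  assumes "degree p > 0"
  shows "p - [:w:] \<noteq> 0"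
  using degree_diff_const[OF assms, of w] assms by auto

lemma order_power:
  fixes p :: "'a::idom poly"
  assumes "p \<noteq> 0"
  shows "order z (p ^ n) = n * order z p"
  using assms by (induction n) (auto simp: order_mult)

lemma sum_order_roots_eq_degree:
  fixes p :: "complex poly"
  assumes "p \<noteq> 0"
  shows "(\<Sum>z | poly p z = 0. order z p) = degree p"
proof -
  have "degree p = size (proots p)"
    by (simp add: size_proots_complex)
  also have "\<dots> = (\<Sum>z\<in>set_mset (proots p). count (proots p) z)"
    by (simp add: size_multiset_overloaded_eq)
  finally show ?thesis
    using assms by simp
qed

lemma sum_order_le_degree_on:
  fixes p :: "'a::idom poly"
  assumes "p \<noteq> 0" "finite Z"
  shows "(\<Sum>z\<in>Z. order z p) \<le> degree p"
proof -
  have "(\<Sum>z\<in>Z. order z p) = (\<Sum>z\<in>Z \<inter> {z. poly p z = 0}. order z p)"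
    using assms by (intro sum.mono_neutral_right) (auto simp: order_0I)
  also have "\<dots> \<le> (\<Sum>z | poly p z = 0. order z p)"
    using assms poly_roots_finite by (intro sum_mono2) auto
  also have "\<dots> \<le> degree p"
    using assms(1) by (rule sum_order_le_degree)
  finally show ?thesis .
qed

lemma order_pcompose:
  fixes p q :: "'a::idom poly"
  assumes "p \<noteq> 0" "degree q > 0"
  shows "order z (pcompose p q) = order (poly q z) p * order z (q - [:poly q z:])"
proof -
  define w where "w = poly q z"
  obtain R where R: "p = [:-w, 1:] ^ order w p * R" "\<not> [:-w, 1:] dvd R"
    using order_decomp[OF assms(1)] by blast
  have "R \<noteq> 0"
    using R assms(1) by auto
  have linear: "pcompose ([:-w, 1:] ^ k) q = (q - [:w:]) ^ k" for k
  proof (induction k)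
    case (Suc k)
    have "pcompose ([:-w, 1:] ^ Suc k) q = pcompose [:-w, 1:] q * pcompose ([:-w, 1:] ^ k) q"
      by (simp only: power_Suc pcompose_mult)
    with Suc show ?case
      by (simp add: pcompose_pCons)
  qed (simp add: pcompose_1)
  have split: "pcompose p q = (q - [:w:]) ^ order w p * pcompose R q"
    by (subst R(1)) (simp add: pcompose_mult linear)
  have "pcompose R q \<noteq> 0"
    using pcompose_eq_0[OF _ assms(2)] \<open>R \<noteq> 0\<close> by blast
  moreover have "poly (pcompose R q) z \<noteq> 0"
    using R(2) by (simp add: poly_pcompose w_def[symmetric] poly_eq_0_iff_dvd)
  ultimately show ?thesis
    using diff_const_nonzero[OF assms(2)]
    by (simp add: split order_mult order_power order_0I w_def)
qed

lemma finite_fibre_poly: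
  fixes p :: "'a::idom poly"
  assumes "degree p > 0"
  shows "finite {z. poly p z = w}"
proof -
  have "{z. poly p z = w} = {z. poly (p - [:w:]) z = 0}"
    by auto
  then show ?thesis
    using poly_roots_finite[OF diff_const_nonzero[OF assms]] by simp
qed

lemma degree_eq_card_fibre_add_order_pderiv:
  fixes p :: "complex poly"
  assumes "degree p > 0"
  shows "degree p = card {z. poly p z = w} + (\<Sum>z | poly p z = w. order z (pderiv p))"
proof -
  let ?q = "p - [:w:]"
  have "degree p = (\<Sum>z | poly ?q z = 0. order z ?q)"
    using sum_order_roots_eq_degree[OF diff_const_nonzero[OF assms]]
    by (simp add: degree_diff_const[OF assms])
  also have "\<dots> = (\<Sum>z | poly p z = w. Suc (order z (pderiv p)))"
    using order_pderiv[OF diff_const_nonzero[OF assms]] by (intro sum.cong) (auto simp: pderiv_diff)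
  finally show ?thesis
    by (simp add: sum_Suc)
qed

lemma card_fibre_le_degree:
  fixes p :: "complex poly"
  assumes "degree p > 0"
  shows "card {z. poly p z = w} \<le> degree p"
  using degree_eq_card_fibre_add_order_pderiv[OF assms, of w] by linarith

lemma card_fibre_less_degree_iff:
  fixes p :: "complex poly"
  assumes "degree p > 0"
  shows "card {z. poly p z = w} < degree p \<longleftrightarrow> (\<exists>z. poly p z = w \<and> poly (pderiv p) z = 0)"
proof -
  have "pderiv p \<noteq> 0"
    using assms pderiv_eq_0_iff[of p] by auto
  have "card {z. poly p z = w} < degree p \<longleftrightarrow> (\<Sum>z | poly p z = w. order z (pderiv p)) \<noteq> 0"
    using degree_eq_card_fibre_add_order_pderiv[OF assms, of w] by linarith
  also have "\<dots> \<longleftrightarrow> (\<exists>z. poly p z = w \<and> order z (pderiv p) \<noteq> 0)"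
    using finite_fibre_poly[OF assms] by simp
  also have "\<dots> \<longleftrightarrow> (\<exists>z. poly p z = w \<and> poly (pderiv p) z = 0)"
    using \<open>pderiv p \<noteq> 0\<close> order_root by blast
  finally show ?thesis .
qed

lemma riemann_hurwitz_poly:
  fixes p :: "complex poly"
  assumes "degree p > 0" "finite W"
  shows "(\<Sum>w\<in>W. degree p - card {z. poly p z = w}) \<le> degree p - 1"
proof -
  have "pderiv p \<noteq> 0"
    using assms pderiv_eq_0_iff[of p] by auto
  have "(\<Sum>w\<in>W. degree p - card {z. poly p z = w})
      = (\<Sum>w\<in>W. \<Sum>z | poly p z = w. order z (pderiv p))"
    using degree_eq_card_fibre_add_order_pderiv[OF assms(1)]
    by (intro sum.cong refl) (metis add_diff_cancel_left')
  also have "\<dots> = (\<Sum>z\<in>(\<Union>w\<in>W. {z. poly p z = w}). order z (pderiv p))"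
    using assms finite_fibre_poly by (intro sum.UNION_disjoint[symmetric]) auto
  also have "\<dots> \<le> degree (pderiv p)"
    using \<open>pderiv p \<noteq> 0\<close> assms finite_fibre_poly by (intro sum_order_le_degree_on) auto
  finally show ?thesis
    by (simp add: degree_pderiv)
qed

section \<open>Composites that are \<open>d\<close>-th powers\<close>

lemma complex_poly_factor_power:
  fixes p :: "complex poly"
  assumes "p \<noteq> 0" "d > 0" "\<And>z. z \<noteq> r \<Longrightarrow> d dvd order z p"
  obtains Q where "p = smult (lead_coeff p) ([:-r, 1:] ^ order r p * Q ^ d)"
proof -
  define Z where "Z = {z. poly p z = 0} - {r}"
  define Q where "Q = (\<Prod>z\<in>Z. [:-z, 1:] ^ (order z p div d))"
  have "finite Z"
    unfolding Z_def using poly_roots_finite[OF assms(1)] by simp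
  have "Q ^ d = (\<Prod>z\<in>Z. [:-z, 1:] ^ (order z p div d * d))"
    unfolding Q_def by (simp add: prod_power_distrib power_mult)
  also have "\<dots> = (\<Prod>z\<in>Z. [:-z, 1:] ^ order z p)"
    using assms(3) unfolding Z_def by (intro prod.cong) auto
  finally have Q: "Q ^ d = (\<Prod>z\<in>Z. [:-z, 1:] ^ order z p)" .
  have "(\<Prod>z | poly p z = 0. [:-z, 1:] ^ order z p) = [:-r, 1:] ^ order r p * Q ^ d"
  proof (cases "poly p r = 0")
    case True
    then have "(\<Prod>z | poly p z = 0. [:-z, 1:] ^ order z p)
        = [:-r, 1:] ^ order r p * (\<Prod>z\<in>Z. [:-z, 1:] ^ order z p)"
      unfolding Z_def using poly_roots_finite[OF assms(1)] by (subst prod.remove[of _ r]) auto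
    then show ?thesis
      by (simp add: Q)
  next
    case False
    then show ?thesis
      unfolding Q Z_def by (simp add: order_0I)
  qed
  with complex_poly_decompose[of p] have "p = smult (lead_coeff p) ([:-r, 1:] ^ order r p * Q ^ d)"
    by simp
  then show ?thesis
    by (rule that)
qed

lemma complex_poly_eq_smult_power:
  fixes p :: "complex poly"
  assumes "p \<noteq> 0" "d > 0" "\<And>z. d dvd order z p"
  obtains S where "p = smult (lead_coeff p) (S ^ d)"
proof -
  obtain Q where Q: "p = smult (lead_coeff p) ([:-0, 1:] ^ order 0 p * Q ^ d)"
    by (rule complex_poly_factor_power[OF assms(1,2) assms(3)])
  obtain j where "order 0 p = j * d"
    using assms(3)[of 0] by (metis dvdE mult.commute)
  with Q have "p = smult (lead_coeff p) (([:0, 1:] ^ j * Q) ^ d)"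
    by (simp add: power_mult power_mult_distrib)
  then show ?thesis
    using that by blast
qed

lemma complex_poly_power_eq_imp_eq_smult:
  fixes p q :: "complex poly"
  assumes "p ^ d = q ^ d" "d > 0"
  obtains \<zeta> where "\<zeta> ^ d = 1" "p = smult \<zeta> q"
proof (cases "q = 0")
  case True
  with assms show ?thesis
    using that[of 1] by (simp add: power_0_left)
next
  case False
  with assms have "p \<noteq> 0"
    by (auto simp: power_0_left)
  have order_eq: "order z p = order z q" for z
    using arg_cong[OF assms(1), of "order z"] assms(2) \<open>p \<noteq> 0\<close> False by (simp add: order_power)
  then have roots_eq: "{z. poly p z = 0} = {z. poly q z = 0}"
    using order_root[of p] order_root[of q] \<open>p \<noteq> 0\<close> False by auto
  define X where "X = (\<Prod>z | poly p z = 0. [:-z, 1:] ^ order z p)"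
  have p_X: "p = smult (lead_coeff p) X"
    unfolding X_def using complex_poly_decompose[of p] by simp
  have q_X: "q = smult (lead_coeff q) X"
    unfolding X_def roots_eq using complex_poly_decompose[of q] order_eq by simp
  have p_eq: "p = smult (lead_coeff p / lead_coeff q) q"
    using False by (subst q_X) (simp add: p_X[symmetric])
  have "q ^ d = smult ((lead_coeff p / lead_coeff q) ^ d) (q ^ d)"
    using assms(1) p_eq by (metis smult_power)
  then have "lead_coeff (q ^ d) = (lead_coeff p / lead_coeff q) ^ d * lead_coeff (q ^ d)"
    by (metis coeff_smult)
  moreover have "lead_coeff (q ^ d) \<noteq> 0"
    using False by simp
  ultimately have "(lead_coeff p / lead_coeff q) ^ d = 1"
    by (metis mult_cancel_right1)
  with p_eq show ?thesis
    using that by blast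
qed

lemma root_unity_eq_1_if_coprime:
  fixes u :: "'a::comm_ring_1"
  assumes "u ^ k = 1" "u ^ d = 1" "coprime k d"
  shows "u = 1"
proof (cases "k = 0")
  case True
  with assms show ?thesis
    by simp
next
  case False
  obtain x y where "k * x = d * y + 1"
    using bezout_nat[OF False, of d] assms(3) by auto
  then have "(u ^ k) ^ x = (u ^ d) ^ y * u"
    by (simp flip: power_mult power_Suc2)
  with assms show ?thesis
    by simp
qed

lemma complex_nth_root_exists:
  fixes z :: complex
  assumes "n > 0"
  obtains w where "w ^ n = z"
proof (cases "z = 0")
  case True
  with assms that[of 0] show ?thesis
    by simp
next
  case False
  from bij_betw_apply[OF bij_betw_nth_root_unity[OF False assms], of 1] that show ?thesis
    by auto
qed

lemma dvd_order_pcompose_power: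
  fixes p q h :: "complex poly"
  assumes "pcompose p q = h ^ d" "p \<noteq> 0" "degree q > 0"
  shows "d dvd order (poly q z) p * order z (q - [:poly q z:])"
proof -
  have "pcompose p q \<noteq> 0"
    using pcompose_eq_0[OF _ assms(3)] assms(2) by blast
  then have "h \<noteq> 0 \<or> d = 0"
    using assms(1) by (auto simp: power_0_left)
  then show ?thesis
    using arg_cong[OF assms(1), of "order z"] order_pcompose[OF assms(2,3), of z]
    by (auto simp: order_power)
qed

lemma two_mul_card_fibre_le_degree:
  fixes q :: "complex poly"
  assumes "degree q > 0" "\<And>z. poly q z = s \<Longrightarrow> order z (q - [:s:]) \<noteq> 1"
  shows "2 * card {z. poly q z = s} \<le> degree q"
proof -
  have "order z (q - [:s:]) \<ge> 2" if "poly q z = s" for z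
    using assms(2)[OF that] order_root[of "q - [:s:]" z] diff_const_nonzero[OF assms(1)] that
    by auto
  then have "(\<Sum>z | poly q z = s. 2) \<le> (\<Sum>z | poly q z = s. order z (q - [:s:]))"
    by (intro sum_mono) auto
  also have "\<dots> = degree q"
    using sum_order_roots_eq_degree[OF diff_const_nonzero[OF assms(1)], of s]
    by (simp add: degree_diff_const[OF assms(1)])
  finally show ?thesis
    by simp
qed

text \<open>Over a root of \<open>p\<close> whose multiplicity is prime to \<open>d\<close>, every point of the \<open>q\<close>-fibre is a
  critical point of \<open>q\<close>, so the fibre has at most \<open>deg q / 2\<close> points; two such fibres would exceed
  the Riemann--Hurwitz bound.\<close>
lemma order_not_dvd_unique:
  fixes p q h :: "complex poly"
  assumes "pcompose p q = h ^ d" "p \<noteq> 0" "degree q > 0"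
    and "\<not> d dvd order s\<^sub>1 p" "\<not> d dvd order s\<^sub>2 p"
  shows "s\<^sub>1 = s\<^sub>2"
proof (rule ccontr)
  assume "s\<^sub>1 \<noteq> s\<^sub>2"
  have small_fibre: "2 * card {z. poly q z = s} \<le> degree q" if "\<not> d dvd order s p" for s
  proof (rule two_mul_card_fibre_le_degree[OF assms(3)])
    fix z
    assume "poly q z = s"
    then have "d dvd order s p * order z (q - [:s:])"
      using dvd_order_pcompose_power[OF assms(1-3), of z] by simp
    with that show "order z (q - [:s:]) \<noteq> 1"
      by auto
  qed
  have "(\<Sum>s\<in>{s\<^sub>1, s\<^sub>2}. degree q - card {z. poly q z = s}) \<le> degree q - 1"
    using riemann_hurwitz_poly[OF assms(3)] by simp
  with \<open>s\<^sub>1 \<noteq> s\<^sub>2\<close> small_fibre[OF assms(4)] small_fibre[OF assms(5)] assms(3) show False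
    by simp
qed

lemma pcompose_eq_power_factor_left:
  fixes P B H :: "complex poly"
  assumes "d \<ge> 2" "P \<noteq> 0" "degree B > 0" "coprime (degree P) d" "pcompose P B = H ^ d"
  obtains r Q where "coprime (order r P) d" "P = smult (lead_coeff P) ([:-r, 1:] ^ order r P * Q ^ d)"
proof -
  have "\<not> d dvd degree P"
    using assms(1,4) by auto
  then obtain r where r: "\<not> d dvd order r P"
    using sum_order_roots_eq_degree[OF assms(2)] by (metis dvd_sum)
  have others: "d dvd order z P" if "z \<noteq> r" for z
    using order_not_dvd_unique[OF assms(5,2,3), of z r] r that by blast
  obtain Q where Q: "P = smult (lead_coeff P) ([:-r, 1:] ^ order r P * Q ^ d)"
    by (rule complex_poly_factor_power[OF assms(2) _ others]) (use assms(1) in auto)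
  then have "Q \<noteq> 0"
    using assms(1,2) by (auto simp: power_0_left)
  have "degree P = degree ([:-r, 1:] ^ order r P * Q ^ d)"
    using assms(2) by (subst Q) simp
  also have "\<dots> = order r P + d * degree Q"
    using \<open>Q \<noteq> 0\<close> by (simp add: degree_mult_eq degree_power_eq)
  finally have "coprime (order r P) d"
    using assms(4) by (simp add: coprime_imp_coprime dvd_mult)
  then show ?thesis
    using Q by (rule that)
qed

lemma pcompose_eq_power_factor_right:
  fixes P B H :: "complex poly"
  assumes "d > 0" "P \<noteq> 0" "degree B > 0" "coprime (order r P) d" "pcompose P B = H ^ d"
  obtains S where "B - [:r:] = smult (lead_coeff (B - [:r:])) (S ^ d)"
proof -
  have B_orders: "d dvd order z (B - [:r:])" for z
  proof (cases "poly B z = r")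
    case True
    then have "d dvd order r P * order z (B - [:r:])"
      using dvd_order_pcompose_power[OF assms(5,2,3), of z] by simp
    with assms(4) show ?thesis
      by (metis coprime_commute coprime_dvd_mult_right_iff)
  qed (simp add: order_0I)
  show ?thesis
    by (rule complex_poly_eq_smult_power[OF diff_const_nonzero[OF assms(3)] assms(1) B_orders])
      (rule that)
qed

lemma pcompose_diff_const_eq_power_factor:
  fixes A B H :: "complex poly"
  assumes "d \<ge> 2" "degree A > 0" "degree B > 0" "coprime (degree A) d"
    and "pcompose A B - [:c:] = H ^ d"
  obtains r a k Q b S where "a \<noteq> 0" "b \<noteq> 0" "coprime k d"
    "A - [:c:] = smult a ([:-r, 1:] ^ k * Q ^ d)" "B = [:r:] + smult b (S ^ d)"
proof -
  define P where "P = A - [:c:]"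
  have "P \<noteq> 0" "degree P = degree A"
    unfolding P_def using diff_const_nonzero[OF assms(2)] degree_diff_const[OF assms(2)] by simp_all
  have comp: "pcompose P B = H ^ d"
    unfolding P_def using assms(5) by (simp add: pcompose_diff)
  obtain r Q where "coprime (order r P) d" and Q: "P = smult (lead_coeff P) ([:-r, 1:] ^ order r P * Q ^ d)"
    using pcompose_eq_power_factor_left[OF assms(1) \<open>P \<noteq> 0\<close> assms(3) _ comp] assms(4)
      \<open>degree P = degree A\<close> by metis
  obtain S where S: "B - [:r:] = smult (lead_coeff (B - [:r:])) (S ^ d)"
    using pcompose_eq_power_factor_right[OF _ \<open>P \<noteq> 0\<close> assms(3) \<open>coprime (order r P) d\<close> comp]
      assms(1) by auto
  show ?thesis
  proof (rule that)
    show "lead_coeff P \<noteq> 0" "lead_coeff (B - [:r:]) \<noteq> 0"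
      using \<open>P \<noteq> 0\<close> diff_const_nonzero[OF assms(3), of r] leading_coeff_0_iff by blast+
    show "A - [:c:] = smult (lead_coeff P) ([:-r, 1:] ^ order r P * Q ^ d)"
      using Q by (simp add: P_def)
    show "B = [:r:] + smult (lead_coeff (B - [:r:])) (S ^ d)"
      using S by (metis add_diff_cancel_left' diff_add_cancel)
  qed fact
qed

section \<open>Symmetric solutions\<close>

abbreviation unicrit :: "nat \<Rightarrow> complex \<Rightarrow> complex poly" where
  "unicrit d c \<equiv> monom 1 d + [:c:]"

lemma poly_ext: "(\<And>x. poly p x = poly q (x::complex)) \<Longrightarrow> p = q"
  using poly_eq_poly_eq_iff by blast

lemma poly_iter_Suc: "poly_iter f (Suc n) = pcompose f (poly_iter f n)"
  by (simp add: poly_iter_def)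

lemma poly_iter_Suc': "poly_iter f (Suc n) = pcompose (poly_iter f n) f"
proof (induction n)
  case 0
  show ?case
    by (rule poly_ext) (simp add: poly_iter_def poly_pcompose)
next
  case (Suc n)
  have "poly_iter f (Suc (Suc n)) = pcompose f (pcompose (poly_iter f n) f)"
    by (simp only: poly_iter_Suc[of f "Suc n"] Suc)
  also have "\<dots> = pcompose (poly_iter f (Suc n)) f"
    by (simp only: pcompose_assoc poly_iter_Suc)
  finally show ?case .
qed

lemma pcompose_unicrit: "pcompose (unicrit d c) h = h ^ d + [:c:]"
  by (rule poly_ext) (simp add: poly_pcompose poly_monom)

lemma degree_unicrit: "d > 0 \<Longrightarrow> degree (unicrit d c) = d"
  by (subst degree_add_eq_left) (auto simp: degree_monom_eq)

lemma degree_affine_monom: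
  "d > 0 \<Longrightarrow> b \<noteq> 0 \<Longrightarrow> degree ([:r:] + smult b (monom (1::complex) d)) = d"
  by (subst degree_add_eq_right) (auto simp: degree_monom_eq)

lemma semiconj_iterate_diff_const_eq_power:
  assumes "pcompose (poly_iter (unicrit d c) (Suc m)) A = pcompose A B"
  shows "pcompose A B - [:c:] = pcompose (poly_iter (unicrit d c) m) A ^ d"
proof -
  have "pcompose A B = pcompose (unicrit d c) (pcompose (poly_iter (unicrit d c) m) A)"
    using assms by (simp add: poly_iter_Suc pcompose_assoc)
  then show ?thesis
    by (simp add: pcompose_unicrit)
qed

definition root_unity_equivariant :: "nat \<Rightarrow> nat \<Rightarrow> complex poly \<Rightarrow> bool" where
  "root_unity_equivariant d k p \<longleftrightarrow> (\<forall>\<xi> u. \<xi> ^ d = 1 \<longrightarrow> poly p (\<xi> * u) = \<xi> ^ k * poly p u)"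

lemma pcompose_unicrit_twist:
  fixes A Q :: "complex poly"
  assumes "A - [:c:] = smult a ([:-r, 1:] ^ k * Q ^ d)" "\<omega> ^ d = a * b ^ k"
  defines "M \<equiv> [:r:] + smult b (monom 1 d)"
  shows "pcompose (unicrit d c) (smult \<omega> (monom 1 k * pcompose Q M)) = pcompose A M"
proof (rule poly_ext)
  fix u
  define y where "y = poly Q (r + b * u ^ d)"
  have "poly (pcompose (unicrit d c) (smult \<omega> (monom 1 k * pcompose Q M))) u
      = (\<omega> * u ^ k * y) ^ d + c"
    by (simp add: M_def y_def poly_pcompose poly_monom mult.assoc)
  also have "\<dots> = \<omega> ^ d * (u ^ d) ^ k * y ^ d + c"
    by (simp add: power_mult_distrib power_mult[symmetric] mult.commute[of k d])
  also have "\<dots> = a * (b * u ^ d) ^ k * y ^ d + c"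
    using assms(2) by (simp add: power_mult_distrib)
  also have "\<dots> = poly A (r + b * u ^ d)"
    using arg_cong[OF assms(1), of "\<lambda>p. poly p (r + b * u ^ d)"]
    by (simp add: y_def mult.assoc diff_eq_eq)
  also have "\<dots> = poly (pcompose A M) u"
    by (simp add: M_def poly_pcompose poly_monom)
  finally show "poly (pcompose (unicrit d c) (smult \<omega> (monom 1 k * pcompose Q M))) u
      = poly (pcompose A M) u" .
qed

lemma root_unity_equivariant_twist:
  "root_unity_equivariant d k (smult \<omega> (monom 1 k * pcompose Q ([:r:] + smult b (monom 1 d))))"
  unfolding root_unity_equivariant_def by (simp add: poly_pcompose poly_monom power_mult_distrib)

lemma pcompose_power_root_eq_twist:
  fixes A Q S H :: "complex poly" and r b :: complex and d :: nat
  defines "M \<equiv> [:r:] + smult b (monom 1 d)"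
  assumes A_eq: "A - [:c:] = smult a ([:-r, 1:] ^ k * Q ^ d)" and "d > 0"
    and H: "pcompose A (pcompose M S) - [:c:] = H ^ d"
  obtains \<omega> where "\<omega> ^ d = a * b ^ k" "H = pcompose (smult \<omega> (monom 1 k * pcompose Q M)) S"
proof -
  obtain \<omega>\<^sub>0 where \<omega>\<^sub>0: "\<omega>\<^sub>0 ^ d = a * b ^ k"
    using complex_nth_root_exists[OF \<open>d > 0\<close>] .
  define T where "T = smult \<omega>\<^sub>0 (monom 1 k * pcompose Q M)"
  have "H ^ d = pcompose (unicrit d c) (pcompose T S) - [:c:]"
    using H pcompose_unicrit_twist[OF A_eq \<omega>\<^sub>0] by (simp add: T_def M_def pcompose_assoc)
  also have "\<dots> = pcompose T S ^ d"
    by (simp add: pcompose_unicrit)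
  finally obtain \<zeta> where "\<zeta> ^ d = 1" "H = smult \<zeta> (pcompose T S)"
    by (rule complex_poly_power_eq_imp_eq_smult[OF _ \<open>d > 0\<close>])
  with \<omega>\<^sub>0 show ?thesis
    using that[of "\<zeta> * \<omega>\<^sub>0"] by (simp add: T_def power_mult_distrib pcompose_smult)
qed

text \<open>With \<open>A - c = a (x - r)^k Q^d\<close> and \<open>B = r + b S^d\<close>, the new solution is
  \<open>A' = \<omega> x^k Q(r + b x^d)\<close>, \<open>B' = S(r + b x^d)\<close>, where \<open>\<omega>\<close> is chosen so that
  \<open>A' \<circ> S = f^m \<circ> A\<close>.\<close>
lemma symmetric_semiconjugacy:
  fixes A B :: "complex poly"
  assumes "d \<ge> 2" "degree A > 0" "degree B > 0" "coprime (degree A) d"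
    and semiconj: "pcompose (poly_iter (unicrit d c) (Suc m)) A = pcompose A B"
  obtains A' B' k r b where "degree A' = degree A" "degree B' > 0" "coprime k d"
    "pcompose (poly_iter (unicrit d c) (Suc m)) A' = pcompose A' B'"
    "root_unity_equivariant d k A'"
    "pcompose (unicrit d c) A' = pcompose A ([:r:] + smult b (monom 1 d))" "b \<noteq> 0"
proof -
  define g where "g = poly_iter (unicrit d c) m"
  have H: "pcompose A B - [:c:] = pcompose g A ^ d"
    unfolding g_def by (rule semiconj_iterate_diff_const_eq_power[OF semiconj])
  then obtain r a k Q b S where "b \<noteq> 0" "coprime k d"
    and A_eq: "A - [:c:] = smult a ([:-r, 1:] ^ k * Q ^ d)" and B_eq: "B = [:r:] + smult b (S ^ d)"
    by (rule pcompose_diff_const_eq_power_factor[OF assms(1-4)])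
  define M where "M = [:r:] + smult b (monom 1 d)"
  have B_M: "B = pcompose M S"
    unfolding B_eq M_def by (rule poly_ext) (simp add: poly_pcompose poly_monom)
  obtain \<omega> where \<omega>: "\<omega> ^ d = a * b ^ k"
    and H_eq: "pcompose g A = pcompose (smult \<omega> (monom 1 k * pcompose Q M)) S"
    by (rule pcompose_power_root_eq_twist[OF A_eq _ H[unfolded B_M M_def], folded M_def])
      (use assms(1) in simp)
  define A' where "A' = smult \<omega> (monom 1 k * pcompose Q M)"
  have twist: "pcompose (unicrit d c) A' = pcompose A M"
    unfolding A'_def M_def by (rule pcompose_unicrit_twist[OF A_eq \<omega>])
  have degree_M: "degree M = d"
    unfolding M_def using degree_affine_monom \<open>b \<noteq> 0\<close> assms(1) by simp
  show ?thesis
  proof (rule that)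
    have "d * degree A' = degree A * d"
      using arg_cong[OF twist, of degree] assms(1) degree_M by (simp add: degree_pcompose degree_unicrit)
    then show "degree A' = degree A"
      using assms(1) by simp
    show "degree (pcompose S M) > 0"
      using assms(3) degree_M by (simp add: B_M degree_pcompose)
    have "pcompose (poly_iter (unicrit d c) (Suc m)) A' = pcompose g (pcompose A M)"
      by (simp add: g_def poly_iter_Suc' pcompose_assoc[symmetric] twist)
    also have "\<dots> = pcompose A' (pcompose S M)"
      by (simp add: pcompose_assoc H_eq A'_def)
    finally show "pcompose (poly_iter (unicrit d c) (Suc m)) A' = pcompose A' (pcompose S M)" .
    show "root_unity_equivariant d k A'"
      unfolding A'_def M_def by (rule root_unity_equivariant_twist)
  qed (use twist \<open>b \<noteq> 0\<close> \<open>coprime k d\<close> in \<open>simp_all add: M_def\<close>)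
qed

section \<open>Critical values of symmetric solutions\<close>

lemma card_fibre_root_unity_equivariant:
  assumes "root_unity_equivariant d k p" "\<xi> ^ d = 1" "d > 0"
  shows "card {z. poly p z = \<xi> ^ k * w} = card {z. poly p z = w}"
proof -
  have "\<xi> \<noteq> 0"
    using assms(2,3) by (auto simp: power_0_left)
  have "{z. poly p z = \<xi> ^ k * w} = (\<lambda>z. \<xi> * z) ` {z. poly p z = w}"
  proof (intro set_eqI iffI)
    fix y
    assume "y \<in> {z. poly p z = \<xi> ^ k * w}"
    moreover have "poly p (\<xi> * (inverse \<xi> * y)) = \<xi> ^ k * poly p (inverse \<xi> * y)"
      using assms(1,2) unfolding root_unity_equivariant_def by blast
    moreover have "\<xi> * (inverse \<xi> * y) = y"
      using \<open>\<xi> \<noteq> 0\<close> by (simp add: mult.assoc[symmetric])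
    ultimately have "\<xi> ^ k * poly p (inverse \<xi> * y) = \<xi> ^ k * w"
      by auto
    then have "inverse \<xi> * y \<in> {z. poly p z = w}"
      using \<open>\<xi> \<noteq> 0\<close> by simp
    then show "y \<in> (\<lambda>z. \<xi> * z) ` {z. poly p z = w}"
      using \<open>\<xi> \<noteq> 0\<close> by (intro image_eqI[of _ _ "inverse \<xi> * y"]) simp_all
  next
    fix y
    assume "y \<in> (\<lambda>z. \<xi> * z) ` {z. poly p z = w}"
    then obtain z where "y = \<xi> * z" "poly p z = w"
      by blast
    with assms(1,2) show "y \<in> {z. poly p z = \<xi> ^ k * w}"
      unfolding root_unity_equivariant_def by simp
  qed
  moreover have "inj_on (\<lambda>z. \<xi> * z) {z. poly p z = w}"
    using \<open>\<xi> \<noteq> 0\<close> by (simp add: inj_on_def)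
  ultimately show ?thesis
    by (simp add: card_image)
qed

lemma inj_on_roots_unity_power:
  fixes c :: complex
  assumes "coprime k d" "c \<noteq> 0" "d > 0"
  shows "inj_on (\<lambda>\<xi>. \<xi> ^ k * c) {\<xi>. \<xi> ^ d = 1}"
proof (rule inj_onI)
  fix x y :: complex
  assume "x \<in> {\<xi>. \<xi> ^ d = 1}" "y \<in> {\<xi>. \<xi> ^ d = 1}" "x ^ k * c = y ^ k * c"
  moreover from this have "y \<noteq> 0"
    using assms(3) by (auto simp: power_0_left)
  ultimately have "(x / y) ^ k = 1" "(x / y) ^ d = 1"
    using assms(2) by (simp_all add: power_divide)
  then have "x / y = 1"
    using assms(1) by (rule root_unity_eq_1_if_coprime)
  with \<open>y \<noteq> 0\<close> show "x = y"
    by simp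
qed

lemma card_fibre_diff_const_factor:
  fixes P :: "complex poly"
  assumes "P - [:c:] = smult a ([:-r, 1:] ^ k * Q ^ d)" "a \<noteq> 0" "k > 0" "d > 0" "degree P > 0"
  shows "d * card {z. poly P z = c} \<le> d + degree P - 1"
proof -
  have "Q \<noteq> 0"
    using assms(1,4) diff_const_nonzero[OF assms(5)] by (auto simp: power_0_left)
  have "{z. poly P z = c} \<subseteq> insert r {z. poly Q z = 0}"
  proof
    fix z
    assume "z \<in> {z. poly P z = c}"
    then have "a * ((z - r) ^ k * poly Q z ^ d) = 0"
      using arg_cong[OF assms(1), of "\<lambda>p. poly p z"] by simp
    with assms(2) show "z \<in> insert r {z. poly Q z = 0}"
      by auto
  qed
  then have "card {z. poly P z = c} \<le> card (insert r {z. poly Q z = 0})"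
    using poly_roots_finite[OF \<open>Q \<noteq> 0\<close>] by (intro card_mono) auto
  also have "\<dots> \<le> Suc (card {z. poly Q z = 0})"
    using poly_roots_finite[OF \<open>Q \<noteq> 0\<close>] by (simp add: card_insert_if)
  also have "\<dots> \<le> Suc (degree Q)"
    using card_poly_roots_bound[OF \<open>Q \<noteq> 0\<close>] by simp
  finally have "d * card {z. poly P z = c} \<le> d * Suc (degree Q)"
    by (rule mult_le_mono2)
  moreover have "degree P = k + d * degree Q"
    using arg_cong[OF assms(1), of degree] assms(2) \<open>Q \<noteq> 0\<close>
    by (simp add: degree_diff_const[OF assms(5)] degree_mult_eq degree_power_eq)
  ultimately show ?thesis
    using assms(3) by simp
qed

lemma nat_eq_2_from_bounds:
  fixes d m N :: nat
  assumes "d \<ge> 2" "m \<ge> 2" "N \<le> m" "d * N \<le> d + m - 1" "d * (m - N) \<le> m - 1"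
  shows "d = 2"
proof -
  have "d * m = d * N + d * (m - N)"
    using assms(3) by (simp add: diff_mult_distrib2)
  moreover have "(d - 2) * m \<ge> (d - 2) * 2"
    using assms(2) by simp
  moreover have "(d - 2) * m = d * m - 2 * m"
    by (simp add: diff_mult_distrib)
  ultimately show ?thesis
    using assms by linarith
qed

lemma mult_card_fibre_le_of_pcompose_power:
  fixes A B H :: "complex poly"
  assumes "d \<ge> 2" "degree A > 0" "degree B > 0" "coprime (degree A) d"
    and "pcompose A B - [:c:] = H ^ d"
  shows "d * card {z. poly A z = c} \<le> d + degree A - 1"
proof -
  obtain r a k Q b S where "a \<noteq> 0" "coprime k d" "A - [:c:] = smult a ([:-r, 1:] ^ k * Q ^ d)"
    by (rule pcompose_diff_const_eq_power_factor[OF assms])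
  moreover have "k > 0"
    using \<open>coprime k d\<close> assms(1) by (cases k) auto
  ultimately show ?thesis
    using card_fibre_diff_const_factor assms(1,2) by simp
qed

lemma sum_defect_root_unity_orbit:
  fixes A :: "complex poly"
  assumes "root_unity_equivariant d k A" "coprime k d" "c \<noteq> 0" "d > 0"
  shows "(\<Sum>w\<in>(\<lambda>\<xi>. \<xi> ^ k * c) ` {\<xi>. \<xi> ^ d = 1}. degree A - card {z. poly A z = w})
    = d * (degree A - card {z. poly A z = c})"
proof -
  have "(\<Sum>w\<in>(\<lambda>\<xi>. \<xi> ^ k * c) ` {\<xi>. \<xi> ^ d = 1}. degree A - card {z. poly A z = w})
      = (\<Sum>\<xi>::complex | \<xi> ^ d = 1. degree A - card {z. poly A z = c})"
    using card_fibre_root_unity_equivariant[OF assms(1) _ assms(4)]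
    by (simp add: sum.reindex[OF inj_on_roots_unity_power[OF assms(2-4)]])
  also have "\<dots> = d * (degree A - card {z. poly A z = c})"
    using card_roots_unity_eq[OF assms(4)] by simp
  finally show ?thesis .
qed

lemma equivariant_critical_values:
  fixes A B H :: "complex poly"
  assumes "d \<ge> 2" "c \<noteq> 0" "degree A \<ge> 2" "degree B > 0" "coprime (degree A) d" "coprime k d"
    and "pcompose A B - [:c:] = H ^ d" and "root_unity_equivariant d k A"
  shows "d = 2" and "card {z. poly A z = -c} < degree A"
    and "card {z. poly A z = w} < degree A \<Longrightarrow> w = c \<or> w = -c"
proof -
  define m where "m = degree A"
  define N where "N = card {z. poly A z = c}"
  define W where "W = (\<lambda>\<xi>. \<xi> ^ k * c) ` {\<xi>. \<xi> ^ d = 1}"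
  have "degree A > 0" "d > 0"
    using assms(1,3) by simp_all
  then have "finite W"
    unfolding W_def by (intro finite_imageI finite_roots_unity) simp
  have fibre_c: "d * N \<le> d + m - 1"
    unfolding N_def m_def by (rule mult_card_fibre_le_of_pcompose_power[OF assms(1) _ assms(4,5,7)])
      (use \<open>degree A > 0\<close> in simp)
  have defect_W: "(\<Sum>w\<in>W. m - card {z. poly A z = w}) = d * (m - N)"
    unfolding W_def m_def N_def by (rule sum_defect_root_unity_orbit[OF assms(8,6,2) \<open>d > 0\<close>])
  then have "d * (m - N) \<le> m - 1"
    using riemann_hurwitz_poly[OF \<open>degree A > 0\<close> \<open>finite W\<close>] unfolding m_def by simp
  then show "d = 2"
    using nat_eq_2_from_bounds[OF assms(1,3)] card_fibre_le_degree[OF \<open>degree A > 0\<close>] fibre_c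
    unfolding m_def N_def by blast
  then have "odd k"
    using assms(6) by simp
  have "card {z. poly A z = -c} = N"
    using card_fibre_root_unity_equivariant[OF assms(8), of "-1" c] \<open>d = 2\<close> \<open>odd k\<close>
    unfolding N_def by simp
  then show "card {z. poly A z = -c} < degree A"
    using fibre_c assms(3) unfolding \<open>d = 2\<close> m_def by linarith
  assume "card {z. poly A z = w} < degree A"
  show "w = c \<or> w = -c"
  proof (rule ccontr)
    assume "\<not> (w = c \<or> w = -c)"
    moreover have "{\<xi>::complex. \<xi> ^ 2 = 1} = {1, -1}"
      using power2_eq_1_iff by auto
    ultimately have "w \<notin> W"
      using \<open>odd k\<close> \<open>d = 2\<close> unfolding W_def by auto
    then have "(m - card {z. poly A z = w}) + d * (m - N) \<le> m - 1"
      using riemann_hurwitz_poly[OF \<open>degree A > 0\<close>, of "insert w W"] \<open>finite W\<close> defect_W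
      unfolding m_def by simp
    with \<open>card {z. poly A z = w} < degree A\<close> fibre_c show False
      unfolding \<open>d = 2\<close> m_def by linarith
  qed
qed

lemma symmetric_solution_critical_values:
  fixes A B :: "complex poly"
  assumes "d \<ge> 2" "c \<noteq> 0" "degree A \<ge> 2" "degree B > 0" "coprime (degree A) d"
    and "pcompose (poly_iter (unicrit d c) (Suc m)) A = pcompose A B"
  obtains A' B' r b where "degree A' = degree A" "degree B' > 0"
    "pcompose (poly_iter (unicrit d c) (Suc m)) A' = pcompose A' B'"
    "pcompose (unicrit d c) A' = pcompose A ([:r:] + smult b (monom 1 d))" "b \<noteq> 0"
    "d = 2" "card {z. poly A' z = -c} < degree A'"
    "\<And>w. card {z. poly A' z = w} < degree A' \<Longrightarrow> w = c \<or> w = -c"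
proof -
  obtain A' B' k r b where A': "degree A' = degree A" "degree B' > 0" "coprime k d"
    "pcompose (poly_iter (unicrit d c) (Suc m)) A' = pcompose A' B'" "root_unity_equivariant d k A'"
    "pcompose (unicrit d c) A' = pcompose A ([:r:] + smult b (monom 1 d))" "b \<noteq> 0"
    by (rule symmetric_semiconjugacy[OF assms(1) _ assms(4,5,6)]) (use assms(3) in simp_all)
  note critical_values = equivariant_critical_values[OF assms(1,2) _ A'(2) _ A'(3)
      semiconj_iterate_diff_const_eq_power[OF A'(4)] A'(5)]
  show ?thesis
    by (rule that[OF A'(1,2,4,6,7)]) (use critical_values A'(1) assms(3,5) in simp_all)
qed

lemma lifted_critical_point_eq_minus_two:
  fixes A A' :: "complex poly"
  assumes "c \<noteq> 0" "b \<noteq> 0" "degree A' > 0"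
    and lift: "pcompose (unicrit 2 c) A' = pcompose A ([:r:] + smult b (monom 1 2))"
    and "poly A z = -c" "poly (pderiv A) z = 0"
    and critical_values: "\<And>w. card {z. poly A' z = w} < degree A' \<Longrightarrow> w = c \<or> w = -c"
  shows "c = -2"
proof -
  define M where "M = [:r:] + smult b (monom (1::complex) 2)"
  obtain x where "x ^ 2 = (z - r) / b"
    using complex_nth_root_exists[of 2] by auto
  then have "poly M x = z"
    using \<open>b \<noteq> 0\<close> by (simp add: M_def poly_monom)
  have A'_at_x: "poly A' x ^ 2 = -2 * c"
    using arg_cong[OF lift, of "\<lambda>p. poly p x"] \<open>poly M x = z\<close> \<open>poly A z = -c\<close>
    by (simp add: M_def poly_pcompose poly_monom) (simp add: eq_neg_iff_add_eq_0 add.commute)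
  have "poly (pderiv (pcompose (unicrit 2 c) A')) x = poly (pderiv (pcompose A M)) x"
    using lift by (simp add: M_def)
  then have "2 * poly A' x * poly (pderiv A') x = 0"
    using \<open>poly M x = z\<close> \<open>poly (pderiv A) z = 0\<close>
    by (simp add: pderiv_pcompose poly_pcompose pderiv_add pderiv_monom poly_monom)
  moreover have "poly A' x \<noteq> 0"
    using A'_at_x \<open>c \<noteq> 0\<close> by auto
  ultimately have "poly (pderiv A') x = 0"
    by simp
  then have "poly A' x = c \<or> poly A' x = -c"
    using critical_values card_fibre_less_degree_iff[OF \<open>degree A' > 0\<close>] by blast
  then have "c * c = (-2) * c"
    using A'_at_x by (auto simp: power2_eq_square)
  with \<open>c \<noteq> 0\<close> show ?thesis
    by (metis mult_right_cancel)
qed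

lemma lin_conj_refl: "lin_conj f f"
  unfolding lin_conj_def by (rule exI[of _ "[:0, 1:]"]) (simp add: pcompose_pCons)

theorem lemma7p3:
  fixes d n :: nat and c :: complex and A B :: "complex poly"
  assumes "d \<ge> 2"
    and "\<not> lin_conj (monom 1 d + [:c:]) (monom 1 d)"
    and "\<not> lin_conj (monom 1 d + [:c:]) (cheb d)"
    and "\<not> lin_conj (monom 1 d + [:c:]) (- cheb d)"
    and "n > 0"
    and "degree A > 0" and "degree B > 0"
    and "pcompose (poly_iter (monom 1 d + [:c:]) n) A = pcompose A B"
    and "gcd d (degree A) = 1"
  shows "degree A = 1"
proof (rule ccontr)
  assume "degree A \<noteq> 1"
  with assms(6) have "degree A \<ge> 2"
    by simp
  have "c \<noteq> 0"
    using assms(2) lin_conj_refl by force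
  have "coprime (degree A) d"
    using assms(9) by (simp add: coprime_iff_gcd_eq_1 gcd.commute)
  obtain m where "n = Suc m"
    using assms(5) gr0_implies_Suc by blast
  obtain A\<^sub>1 B\<^sub>1 r\<^sub>1 b\<^sub>1 where A\<^sub>1: "degree A\<^sub>1 = degree A" "degree B\<^sub>1 > 0"
    "pcompose (poly_iter (unicrit d c) (Suc m)) A\<^sub>1 = pcompose A\<^sub>1 B\<^sub>1"
    "d = 2" "card {z. poly A\<^sub>1 z = -c} < degree A\<^sub>1"
    using symmetric_solution_critical_values[OF assms(1) \<open>c \<noteq> 0\<close> \<open>degree A \<ge> 2\<close> assms(7)
        \<open>coprime (degree A) d\<close>] assms(8) \<open>n = Suc m\<close>
    by metis
  then obtain z where "poly A\<^sub>1 z = -c" "poly (pderiv A\<^sub>1) z = 0"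
    using card_fibre_less_degree_iff assms(6) by (metis gr_zeroI)
  obtain A\<^sub>2 B\<^sub>2 r b where A\<^sub>2: "degree A\<^sub>2 = degree A"
    "pcompose (unicrit d c) A\<^sub>2 = pcompose A\<^sub>1 ([:r:] + smult b (monom 1 d))" "b \<noteq> 0"
    "\<And>w. card {z. poly A\<^sub>2 z = w} < degree A\<^sub>2 \<Longrightarrow> w = c \<or> w = -c"
    by (rule symmetric_solution_critical_values[OF assms(1) \<open>c \<noteq> 0\<close> _ A\<^sub>1(2) _ A\<^sub>1(3)])
      (use A\<^sub>1(1) \<open>degree A \<ge> 2\<close> \<open>coprime (degree A) d\<close> in simp_all)
  have "degree A\<^sub>2 > 0"
    using A\<^sub>2(1) assms(6) by simp
  with A\<^sub>2(2) \<open>d = 2\<close> have "c = -2"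
    using lifted_critical_point_eq_minus_two[OF \<open>c \<noteq> 0\<close> \<open>b \<noteq> 0\<close> \<open>degree A\<^sub>2 > 0\<close> _
        \<open>poly A\<^sub>1 z = -c\<close> \<open>poly (pderiv A\<^sub>1) z = 0\<close> A\<^sub>2(4)] by simp
  then have "cheb d = monom 1 d + [:c:]"
    by (intro poly_ext) (simp add: \<open>d = 2\<close> numeral_2_eq_2 poly_monom)
  with assms(3) lin_conj_refl show False
    by metis
qed

end
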